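(* Let $S=(n,\phi,F)$ be a semicoherent system whose lifetime distribution has no ties. Then for every $k\in[n]$, $$p_k:=\Pr(T=X_{k:n})=\sum_{A\subseteq[n]}m_\phi(A)\,\Pr\Big(X_{k:n}=\min_{i\in A}X_i\Big).$$
   Context: Semicoherent system $S=(n,\phi,F)$: $\phi:2^{[n]}\to\{0,1\}$ nondecreasing (subsets identified with Boolean vectors), $\phi(\varnothing)=0$, $\phi([n])=1$; $F$ is the joint c.d.f. of nonnegative component lifetimes $X_1,\ldots,X_n$ with $\Pr(X_i=X_k)=0$ for $i\neq k$. System lifetime $T=\inf\{t\geq0:\phi(\{i:X_i>t\})=0\}$. $X_{k:n}$ is the $k$th smallest of $X_1,\ldots,X_n$. Möbius transform: $m_\phi(A)=\sum_{B\subseteq A}(-1)^{|A|-|B|}\phi(B)$. Convention: $\min_{i\in\varnothing}X_i=+\infty$ (so the $A=\varnothing$ term vanishes). *)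

theory Defs
  imports "HOL-Probability.Probability"
begin

text \<open>Structure function phi on subsets of [n] = {1..n}, values 0/1 encoded as bool.\<close>
definition semicoherent_sf :: "nat \<Rightarrow> (nat set \<Rightarrow> bool) \<Rightarrow> bool" where
  "semicoherent_sf n phi \<longleftrightarrow>
     (\<forall>A B. A \<subseteq> B \<longrightarrow> B \<subseteq> {1..n} \<longrightarrow> phi A \<longrightarrow> phi B)
     \<and> \<not> phi {} \<and> phi {1..n}"

definition mobius_sf :: "(nat set \<Rightarrow> bool) \<Rightarrow> nat set \<Rightarrow> real" where
  "mobius_sf phi A = (\<Sum>B\<in>Pow A. (-1) ^ (card A - card B) * of_bool (phi B))"

definition sys_lifetime :: "nat \<Rightarrow> (nat set \<Rightarrow> bool) \<Rightarrow> (nat \<Rightarrow> 'w \<Rightarrow> real) \<Rightarrow> 'w \<Rightarrow> real" where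
  "sys_lifetime n phi X \<omega> = Inf {t. t \<ge> 0 \<and> \<not> phi {i\<in>{1..n}. X i \<omega> > t}}"

definition order_stat :: "nat \<Rightarrow> nat \<Rightarrow> (nat \<Rightarrow> 'w \<Rightarrow> real) \<Rightarrow> 'w \<Rightarrow> real" where
  "order_stat k n X \<omega> = sort (map (\<lambda>i. X i \<omega>) [1..<n+1]) ! (k - 1)"

end

theory Submission
  imports Defs
begin

(* The proof is pathwise.  Fix an outcome with nonnegative component lifetimes and a real v.
   (1) The system lifetime T equals v iff the system works on {i. v <= X_i} but fails on
       {i. v < X_i}; this follows from the description "T <= s iff the system has failed on
       {i. s < X_i}" of the infimum defining T, since the set of working components is a step
       function of time with finitely many jumps.
   (2) v is the minimum of X_i over A iff A is contained in {i. v <= X_i} but not in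
       {i. v < X_i}; so by Moebius inversion, sum_A m(A) [v = min_A X] equals
       phi{i. v <= X_i} - phi{i. v < X_i}.
   Together, for v = X_{k:n}, the indicator of {T = X_{k:n}} is almost surely the combination
   sum_A m(A) 1{X_{k:n} = min_A X}, and integrating gives the formula.  The identity holds pathwise. *)

lemma minus_one_power_diff:
  assumes "m \<le> n"
  shows "(-1::'a::ring_1) ^ (n - m) = (-1) ^ n * (-1) ^ m"
proof -
  obtain d where n: "n = m + d" using assms le_Suc_ex by blast
  have "(-1::'a) ^ n * (-1) ^ m = (-1) ^ d * ((-1) ^ m * (-1) ^ m)"
    by (simp add: n power_add ac_simps)
  also have "(-1::'a) ^ m * (-1) ^ m = 1" by (simp flip: power_add)
  finally show ?thesis by (simp add: n)
qed

(* Moebius inversion: summing the Moebius transform over the subsets of B recovers phi(B).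
   It is the library's symmetric inclusion-exclusion principle after absorbing the signs. *)
lemma mobius_inversion:
  assumes "finite B"
  shows "(\<Sum>A\<in>Pow B. mobius_sf phi A) = of_bool (phi B)"
proof -
  define g where "g S = (\<Sum>T\<in>Pow S. (-1::real) ^ card T * of_bool (phi T))" for S
  have mobius_g: "mobius_sf phi S = (-1) ^ card S * g S" if "finite S" for S
    unfolding mobius_sf_def g_def sum_distrib_left
    by (intro sum.cong refl)
       (use that in \<open>auto simp: minus_one_power_diff card_mono mult.assoc\<close>)
  have "of_bool (phi B) = (\<Sum>T\<in>Pow B. (-1) ^ card T * g T)"
    by (rule inclusion_exclusion_symmetric[where g = g]) (auto simp: g_def assms)
  also have "\<dots> = (\<Sum>T\<in>Pow B. mobius_sf phi T)"
    using assms by (intro sum.cong refl) (auto simp: mobius_g finite_subset)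
  finally show ?thesis by simp
qed

lemma mobius_sum_subsets:
  assumes "finite N"
  shows "(\<Sum>A\<in>Pow N. mobius_sf phi A * of_bool (A \<subseteq> {i. P i})) = of_bool (phi {i\<in>N. P i})"
proof -
  have "(\<Sum>A\<in>Pow N. mobius_sf phi A * of_bool (A \<subseteq> {i. P i}))
      = (\<Sum>A\<in>Pow {i\<in>N. P i}. mobius_sf phi A)"
    using assms by (intro sum.mono_neutral_cong_right) auto
  also have "\<dots> = of_bool (phi {i\<in>N. P i})"
    using assms by (intro mobius_inversion) simp
  finally show ?thesis .
qed

(* v is the minimum of x over a finite A iff v is a lower bound that is not strict;
   for A = {} both sides are false, matching the convention min over {} = +infinity. *)
lemma ereal_eq_INF_iff:
  fixes x :: "'a \<Rightarrow> real"
  assumes "finite A"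
  shows "ereal v = (INF i\<in>A. ereal (x i)) \<longleftrightarrow> (\<forall>i\<in>A. v \<le> x i) \<and> \<not> (\<forall>i\<in>A. v < x i)"
proof (cases "A = {}")
  case True
  then show ?thesis by (simp add: top_ereal_def)
next
  case False
  have "(INF i\<in>A. ereal (x i)) = Min ((\<lambda>i. ereal (x i)) ` A)"
    using assms False by (simp add: Min_Inf)
  moreover have "Min ((\<lambda>i. ereal (x i)) ` A) \<in> (\<lambda>i. ereal (x i)) ` A"
    using assms False by (intro Min_in) auto
  ultimately obtain j where j: "j \<in> A" "(INF i\<in>A. ereal (x i)) = ereal (x j)"
    by auto
  have "x j \<le> x i" if "i \<in> A" for i
    using INF_lower[OF that, of "\<lambda>i. ereal (x i)"] j by simp
  with j show ?thesis by force
qed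

lemma mobius_sum_minimum:
  fixes x :: "nat \<Rightarrow> real"
  assumes "finite N"
  shows "(\<Sum>A\<in>Pow N. mobius_sf phi A * of_bool (ereal v = (INF i\<in>A. ereal (x i)))) =
         of_bool (phi {i\<in>N. v \<le> x i}) - of_bool (phi {i\<in>N. v < x i})"
proof -
  have "(\<Sum>A\<in>Pow N. mobius_sf phi A * of_bool (ereal v = (INF i\<in>A. ereal (x i)))) =
        (\<Sum>A\<in>Pow N. mobius_sf phi A * of_bool (A \<subseteq> {i. v \<le> x i})
                    - mobius_sf phi A * of_bool (A \<subseteq> {i. v < x i}))"
    using assms by (intro sum.cong refl) (auto simp: ereal_eq_INF_iff finite_subset)
  also have "\<dots> = of_bool (phi {i\<in>N. v \<le> x i}) - of_bool (phi {i\<in>N. v < x i})"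
    by (simp only: sum_subtractf mobius_sum_subsets[OF assms])
  finally show ?thesis .
qed

lemma semicoherent_sf_mono:
  "semicoherent_sf n phi \<Longrightarrow> phi A \<Longrightarrow> A \<subseteq> B \<Longrightarrow> B \<subseteq> {1..n} \<Longrightarrow> phi B"
  unfolding semicoherent_sf_def by blast

lemma finite_gap_above:
  fixes S :: "real set"
  assumes "finite S"
  obtains m where "s < m" "\<And>x. x \<in> S \<Longrightarrow> s < x \<Longrightarrow> m \<le> x"
proof
  let ?m = "Min (insert (s + 1) {x\<in>S. s < x})"
  have "?m \<in> insert (s + 1) {x\<in>S. s < x}"
    using assms by (intro Min_in) auto
  then show "s < ?m" by auto
  show "?m \<le> x" if "x \<in> S" "s < x" for x
    using assms that by (intro Min_le) auto
qed

lemma finite_gap_below: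
  fixes S :: "real set"
  assumes "finite S" "a < v"
  obtains p where "a \<le> p" "p < v" "\<And>x. x \<in> S \<Longrightarrow> x < v \<Longrightarrow> x \<le> p"
proof
  let ?p = "Max (insert a {x\<in>S. x < v})"
  have "?p \<in> insert a {x\<in>S. x < v}"
    using assms by (intro Max_in) auto
  then show "?p < v" using assms by auto
  show "a \<le> ?p" using assms by (intro Max_ge) auto
  show "x \<le> ?p" if "x \<in> S" "x < v" for x
    using assms that by (intro Max_ge) auto
qed

(* Once every component has failed the system has failed, so the set whose infimum defines
   the system lifetime is nonempty. *)
lemma sys_failure_times_nonempty:
  fixes X :: "nat \<Rightarrow> 'w \<Rightarrow> real"
  assumes "semicoherent_sf n phi"
  shows "{t. t \<ge> 0 \<and> \<not> phi {i\<in>{1..n}. t < X i \<omega>}} \<noteq> {}"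
proof -
  define t where "t = Max (insert 0 ((\<lambda>i. X i \<omega>) ` {1..n}))"
  have "X i \<omega> \<le> t" if "i \<in> {1..n}" for i
    using that unfolding t_def by (intro Max_ge) auto
  then have none_alive: "{i\<in>{1..n}. t < X i \<omega>} = {}"
    by (force simp: not_less)
  have "\<not> phi {i\<in>{1..n}. t < X i \<omega>}"
    using assms unfolding none_alive semicoherent_sf_def by simp
  moreover have "0 \<le> t" unfolding t_def by (intro Max_ge) auto
  ultimately show ?thesis by blast
qed

lemma sys_lifetime_nonneg:
  fixes X :: "nat \<Rightarrow> 'w \<Rightarrow> real"
  assumes "semicoherent_sf n phi"
  shows "0 \<le> sys_lifetime n phi X \<omega>"
  unfolding sys_lifetime_def
  using sys_failure_times_nonempty[OF assms] by (intro cInf_greatest) auto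

(* The infimum defining the lifetime is attained: T <= s iff the system has failed at time s.
   If it still works at s, it keeps working until the next component failure after s. *)
lemma sys_lifetime_le_iff:
  fixes X :: "nat \<Rightarrow> 'w \<Rightarrow> real"
  assumes sc: "semicoherent_sf n phi" and "0 \<le> s"
  shows "sys_lifetime n phi X \<omega> \<le> s \<longleftrightarrow> \<not> phi {i\<in>{1..n}. s < X i \<omega>}"
proof
  assume "\<not> phi {i\<in>{1..n}. s < X i \<omega>}"
  then show "sys_lifetime n phi X \<omega> \<le> s"
    unfolding sys_lifetime_def using \<open>0 \<le> s\<close> by (intro cInf_lower bdd_belowI[of _ 0]) auto
next
  assume le: "sys_lifetime n phi X \<omega> \<le> s"
  show "\<not> phi {i\<in>{1..n}. s < X i \<omega>}"
  proof
    assume alive: "phi {i\<in>{1..n}. s < X i \<omega>}"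
    obtain m where "s < m"
      and gap: "\<And>x. x \<in> (\<lambda>i. X i \<omega>) ` {1..n} \<Longrightarrow> s < x \<Longrightarrow> m \<le> x"
      using finite_gap_above[of "(\<lambda>i. X i \<omega>) ` {1..n}" s] by blast
    have "phi {i\<in>{1..n}. t < X i \<omega>}" if "t < m" for t
      by (rule semicoherent_sf_mono[OF sc alive]) (use gap that in force)+
    then have "m \<le> sys_lifetime n phi X \<omega>"
      unfolding sys_lifetime_def using sys_failure_times_nonempty[OF sc]
      by (intro cInf_greatest) (auto simp flip: not_less)
    with le \<open>s < m\<close> show False by simp
  qed
qed

(* For v > 0 the set of working components is constant on
   the gap [p, v) before v, which excludes T from (p, v). *)
lemma sys_lifetime_eq_iff:
  fixes X :: "nat \<Rightarrow> 'w \<Rightarrow> real"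
  assumes sc: "semicoherent_sf n phi" and nonneg: "\<forall>i\<in>{1..n}. 0 \<le> X i \<omega>"
  shows "sys_lifetime n phi X \<omega> = v \<longleftrightarrow>
         phi {i\<in>{1..n}. v \<le> X i \<omega>} \<and> \<not> phi {i\<in>{1..n}. v < X i \<omega>}"
    (is "?T = v \<longleftrightarrow> phi ?Alive_at \<and> \<not> phi ?Alive_after")
proof (cases v "0::real" rule: linorder_cases)
  case less
  then have "?Alive_at = {1..n}" "?Alive_after = {1..n}"
    using nonneg by force+
  then show ?thesis
    using sc sys_lifetime_nonneg[OF sc, of X \<omega>] less unfolding semicoherent_sf_def by auto
next
  case equal
  then have "?Alive_at = {1..n}" using nonneg by force
  then show ?thesis
    using sc sys_lifetime_nonneg[OF sc, of X \<omega>] sys_lifetime_le_iff[OF sc, of 0 X \<omega>] equal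
    unfolding semicoherent_sf_def by auto
next
  case greater
  obtain p where "0 \<le> p" "p < v"
    and gap: "\<And>x. x \<in> (\<lambda>i. X i \<omega>) ` {1..n} \<Longrightarrow> x < v \<Longrightarrow> x \<le> p"
    using finite_gap_below[of "(\<lambda>i. X i \<omega>) ` {1..n}" 0 v] greater by blast
  have plateau: "{i\<in>{1..n}. s < X i \<omega>} = ?Alive_at" if "p \<le> s" "s < v" for s
    using gap that by force
  have le_p: "?T \<le> p \<longleftrightarrow> \<not> phi ?Alive_at"
    using sys_lifetime_le_iff[OF sc \<open>0 \<le> p\<close>, of X \<omega>] plateau[of p] \<open>p < v\<close> by simp
  have not_between: "\<not> (p < ?T \<and> ?T < v)"
  proof
    assume between: "p < ?T \<and> ?T < v"
    have "0 \<le> ?T" by (rule sys_lifetime_nonneg[OF sc])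
    from sys_lifetime_le_iff[OF sc this, of X \<omega>]
    have "\<not> phi {i\<in>{1..n}. ?T < X i \<omega>}" by simp
    then have "?T \<le> p" using plateau[of ?T] between le_p by simp
    with between show False by simp
  qed
  have "?T \<le> v \<longleftrightarrow> \<not> phi ?Alive_after"
    using sys_lifetime_le_iff[OF sc, of v X \<omega>] greater by simp
  with le_p not_between \<open>p < v\<close> show ?thesis by auto
qed

lemma sorted_nth_le_iff_card:
  fixes ys :: "'a::linorder list"
  assumes "sorted ys" "j < length ys"
  shows "ys ! j \<le> t \<longleftrightarrow> j < card {i. i < length ys \<and> ys ! i \<le> t}"
proof
  assume "ys ! j \<le> t"
  then have "{..j} \<subseteq> {i. i < length ys \<and> ys ! i \<le> t}"
    using assms by (auto intro: order_trans[OF sorted_nth_mono])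
  from card_mono[OF _ this] show "j < card {i. i < length ys \<and> ys ! i \<le> t}" by simp
next
  assume less_card: "j < card {i. i < length ys \<and> ys ! i \<le> t}"
  show "ys ! j \<le> t"
  proof (rule ccontr)
    assume "\<not> ys ! j \<le> t"
    have "{i. i < length ys \<and> ys ! i \<le> t} \<subseteq> {..<j}"
    proof
      fix i assume "i \<in> {i. i < length ys \<and> ys ! i \<le> t}"
      with \<open>\<not> ys ! j \<le> t\<close> have "\<not> j \<le> i"
        using sorted_nth_mono[OF assms(1), of j i] by auto
      then show "i \<in> {..<j}" by simp
    qed
    from card_mono[OF _ this] less_card show False by simp
  qed
qed

lemma order_stat_le_iff:
  assumes "k \<in> {1..n}"
  shows "order_stat k n X \<omega> \<le> t \<longleftrightarrow> k \<le> card {i\<in>{1..n}. X i \<omega> \<le> t}"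
proof -
  let ?xs = "map (\<lambda>i. X i \<omega>) [1..<n+1]"
  have "order_stat k n X \<omega> \<le> t \<longleftrightarrow> k - 1 < card {i. i < length (sort ?xs) \<and> sort ?xs ! i \<le> t}"
    unfolding order_stat_def using assms by (intro sorted_nth_le_iff_card) auto
  also have "card {i. i < length (sort ?xs) \<and> sort ?xs ! i \<le> t} = length (filter (\<lambda>y. y \<le> t) (sort ?xs))"
    by (rule length_filter_conv_card[symmetric])
  also have "\<dots> = length (filter (\<lambda>y. y \<le> t) ?xs)"
    by (simp only: filter_sort length_sort)
  also have "\<dots> = length (filter (\<lambda>i. X i \<omega> \<le> t) [1..<n+1])"
    by (simp only: filter_map length_map o_def)
  also have "\<dots> = card {i\<in>{1..n}. X i \<omega> \<le> t}"
  proof -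
    have "set (filter (\<lambda>i. X i \<omega> \<le> t) [1..<n+1]) = {i\<in>{1..n}. X i \<omega> \<le> t}" by auto
    then show ?thesis by (metis distinct_card distinct_filter distinct_upt)
  qed
  finally show ?thesis using assms by auto
qed

lemma pred_Collect_finite_index:
  assumes "finite I" and P: "\<And>i. i \<in> I \<Longrightarrow> Measurable.pred M (P i)"
  shows "Measurable.pred M (\<lambda>\<omega>. Q {i\<in>I. P i \<omega>})"
proof -
  have "(\<lambda>\<omega>. {i\<in>I. P i \<omega>}) \<in> M \<rightarrow>\<^sub>M count_space (Pow I)"
    unfolding measurable_count_space_eq2[OF finite_Pow_iff[THEN iffD2, OF \<open>finite I\<close>]]
  proof (intro conjI ballI)
    show "(\<lambda>\<omega>. {i\<in>I. P i \<omega>}) \<in> space M \<rightarrow> Pow I" by auto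
    fix B assume "B \<in> Pow I"
    then have "(\<lambda>\<omega>. {i\<in>I. P i \<omega>}) -` {B} \<inter> space M = {\<omega>\<in>space M. \<forall>i\<in>I. P i \<omega> \<longleftrightarrow> i \<in> B}"
      by auto
    also have "\<dots> \<in> sets M"
    proof (rule sets.sets_Collect_finite_All[OF _ \<open>finite I\<close>])
      fix i assume "i \<in> I"
      note P[OF this, measurable]
      show "{\<omega>\<in>space M. P i \<omega> \<longleftrightarrow> i \<in> B} \<in> sets M" by measurable
    qed
    finally show "(\<lambda>\<omega>. {i\<in>I. P i \<omega>}) -` {B} \<inter> space M \<in> sets M" .
  qed
  from measurable_compose[OF this measurable_count_space] show ?thesis .
qed

lemma borel_measurable_order_stat:
  fixes X :: "nat \<Rightarrow> 'w \<Rightarrow> real"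
  assumes X: "\<And>i. i \<in> {1..n} \<Longrightarrow> X i \<in> borel_measurable M" and k: "k \<in> {1..n}"
  shows "order_stat k n X \<in> borel_measurable M"
  unfolding borel_measurable_iff_le
proof
  fix a :: real
  have "Measurable.pred M (\<lambda>\<omega>. X i \<omega> \<le> a)" if "i \<in> {1..n}" for i
    using X[OF that] by measurable
  then have "Measurable.pred M (\<lambda>\<omega>. k \<le> card {i\<in>{1..n}. X i \<omega> \<le> a})"
    using pred_Collect_finite_index[where I = "{1..n}" and P = "\<lambda>i \<omega>. X i \<omega> \<le> a"
        and Q = "\<lambda>B. k \<le> card B"] by simp
  then show "{\<omega>\<in>space M. order_stat k n X \<omega> \<le> a} \<in> sets M"
    unfolding order_stat_le_iff[OF k] pred_def .
qed

lemma borel_measurable_sys_lifetime: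
  fixes X :: "nat \<Rightarrow> 'w \<Rightarrow> real"
  assumes X: "\<And>i. i \<in> {1..n} \<Longrightarrow> X i \<in> borel_measurable M" and sc: "semicoherent_sf n phi"
  shows "sys_lifetime n phi X \<in> borel_measurable M"
  unfolding borel_measurable_iff_le
proof
  fix a :: real
  show "{\<omega>\<in>space M. sys_lifetime n phi X \<omega> \<le> a} \<in> sets M"
  proof (cases "0 \<le> a")
    case True
    have "Measurable.pred M (\<lambda>\<omega>. a < X i \<omega>)" if "i \<in> {1..n}" for i
      using X[OF that] by measurable
    then have "Measurable.pred M (\<lambda>\<omega>. \<not> phi {i\<in>{1..n}. a < X i \<omega>})"
      using pred_Collect_finite_index[where I = "{1..n}" and P = "\<lambda>i \<omega>. a < X i \<omega>"
          and Q = "\<lambda>B. \<not> phi B"] by simp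
    then show ?thesis
      unfolding sys_lifetime_le_iff[OF sc True] pred_def .
  next
    case False
    have "\<not> sys_lifetime n phi X \<omega> \<le> a" for \<omega>
      using False sys_lifetime_nonneg[OF sc, of X \<omega>] by linarith
    then show ?thesis by simp
  qed
qed

lemma borel_measurable_INF_finite:
  assumes "finite A" "\<And>i. i \<in> A \<Longrightarrow> X i \<in> borel_measurable M"
  shows "(\<lambda>\<omega>. INF i\<in>A. ereal (X i \<omega>)) \<in> borel_measurable M"
  using assms by (intro borel_measurable_INF) (auto intro: countable_finite)

lemma (in finite_measure) measure_eq_sum_if_indicator_eq:
  assumes "finite I" "E \<in> sets M" "\<And>A. A \<in> I \<Longrightarrow> F A \<in> sets M"
    and "AE \<omega> in M. indicator E \<omega> = (\<Sum>A\<in>I. c A * indicator (F A) \<omega> :: real)"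
  shows "measure M E = (\<Sum>A\<in>I. c A * measure M (F A))"
proof -
  have "measure M E = integral\<^sup>L M (indicator E)"
    using assms(2) by simp
  also have "\<dots> = integral\<^sup>L M (\<lambda>\<omega>. \<Sum>A\<in>I. c A * indicator (F A) \<omega>)"
  proof (rule integral_cong_AE)
    show "(\<lambda>\<omega>. \<Sum>A\<in>I. c A * indicator (F A) \<omega>) \<in> borel_measurable M"
      using assms(3) by (intro borel_measurable_sum borel_measurable_times) simp_all
  qed (use assms(2,4) in simp_all)
  also have "\<dots> = (\<Sum>A\<in>I. integral\<^sup>L M (\<lambda>\<omega>. c A * indicator (F A) \<omega>))"
    using assms(3) by (intro Bochner_Integration.integral_sum integrable_mult_right)
      (auto simp: emeasure_eq_measure)
  also have "\<dots> = (\<Sum>A\<in>I. c A * measure M (F A))"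
    using assms(3) sets.sets_into_space by (intro sum.cong refl) (simp add: Int_absorb2)
  finally show ?thesis .
qed

lemma lifetime_indicator_mobius_expansion:
  fixes X :: "nat \<Rightarrow> 'w \<Rightarrow> real"
  assumes sc: "semicoherent_sf n phi" and nonneg: "\<forall>i\<in>{1..n}. 0 \<le> X i \<omega>"
  shows "of_bool (sys_lifetime n phi X \<omega> = v) =
         (\<Sum>A\<in>Pow {1..n}. mobius_sf phi A * of_bool (ereal v = (INF i\<in>A. ereal (X i \<omega>))))"
proof -
  have "phi {i\<in>{1..n}. v < X i \<omega>} \<Longrightarrow> phi {i\<in>{1..n}. v \<le> X i \<omega>}"
    by (erule semicoherent_sf_mono[OF sc]) auto
  then have "of_bool (sys_lifetime n phi X \<omega> = v) =
             of_bool (phi {i\<in>{1..n}. v \<le> X i \<omega>}) - (of_bool (phi {i\<in>{1..n}. v < X i \<omega>}) :: real)"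
    by (auto simp: sys_lifetime_eq_iff[where X = X and \<omega> = \<omega>, OF sc nonneg])
  also have "\<dots> = (\<Sum>A\<in>Pow {1..n}. mobius_sf phi A * of_bool (ereal v = (INF i\<in>A. ereal (X i \<omega>))))"
    by (rule mobius_sum_minimum[symmetric]) simp
  finally show ?thesis .
qed

lemma AE_indicator_lifetime_expansion:
  fixes X :: "nat \<Rightarrow> 'w \<Rightarrow> real" and V :: "'w \<Rightarrow> real"
  assumes sc: "semicoherent_sf n phi" and nonneg: "AE \<omega> in M. \<forall>i\<in>{1..n}. 0 \<le> X i \<omega>"
  shows "AE \<omega> in M. indicator {\<omega> \<in> space M. sys_lifetime n phi X \<omega> = V \<omega>} \<omega> =
           (\<Sum>A\<in>Pow {1..n}. mobius_sf phi A *
              indicator {\<omega> \<in> space M. ereal (V \<omega>) = (INF i\<in>A. ereal (X i \<omega>))} \<omega> :: real)"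
  using AE_space nonneg
proof eventually_elim
  case (elim \<omega>)
  then have "indicator {\<omega> \<in> space M. ereal (V \<omega>) = (INF i\<in>A. ereal (X i \<omega>))} \<omega>
             = (of_bool (ereal (V \<omega>) = (INF i\<in>A. ereal (X i \<omega>))) :: real)" for A
    by (simp add: indicator_def)
  moreover have "indicator {\<omega> \<in> space M. sys_lifetime n phi X \<omega> = V \<omega>} \<omega>
                 = (of_bool (sys_lifetime n phi X \<omega> = V \<omega>) :: real)"
    using elim by (simp add: indicator_def)
  ultimately show ?case
    by (simp only: lifetime_indicator_mobius_expansion[where X = X and \<omega> = \<omega>, OF sc elim(2)])
qed

theorem proposition7:
  fixes M :: "'w measure" and n k :: nat and phi :: "nat set \<Rightarrow> bool"
    and X :: "nat \<Rightarrow> 'w \<Rightarrow> real"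
  assumes "prob_space M"
    and "semicoherent_sf n phi"
    and "\<And>i. i \<in> {1..n} \<Longrightarrow> X i \<in> borel_measurable M"
    and "\<And>i. i \<in> {1..n} \<Longrightarrow> AE \<omega> in M. X i \<omega> \<ge> 0"
    and "\<And>i j. i \<in> {1..n} \<Longrightarrow> j \<in> {1..n} \<Longrightarrow> i \<noteq> j \<Longrightarrow>
           measure M {\<omega> \<in> space M. X i \<omega> = X j \<omega>} = 0"
    and "k \<in> {1..n}"
  shows "measure M {\<omega> \<in> space M. sys_lifetime n phi X \<omega> = order_stat k n X \<omega>}
       = (\<Sum>A\<in>Pow {1..n}. mobius_sf phi A *
            measure M {\<omega> \<in> space M.
               ereal (order_stat k n X \<omega>) = (INF i\<in>A. ereal (X i \<omega>))})"
proof -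
  interpret prob_space M by fact
  note sc = \<open>semicoherent_sf n phi\<close> and X = \<open>\<And>i. i \<in> {1..n} \<Longrightarrow> X i \<in> borel_measurable M\<close>
  note [measurable] = borel_measurable_order_stat[OF X \<open>k \<in> {1..n}\<close>] borel_measurable_sys_lifetime[OF X sc]
  have min_events: "{\<omega> \<in> space M. ereal (order_stat k n X \<omega>) = (INF i\<in>A. ereal (X i \<omega>))} \<in> sets M"
    if "A \<in> Pow {1..n}" for A
  proof -
    have [measurable]: "(\<lambda>\<omega>. INF i\<in>A. ereal (X i \<omega>)) \<in> borel_measurable M"
      using that X by (intro borel_measurable_INF_finite) (auto intro: finite_subset)
    show ?thesis by measurable
  qed
  have lifetime_event: "{\<omega> \<in> space M. sys_lifetime n phi X \<omega> = order_stat k n X \<omega>} \<in> sets M"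
    by measurable
  have "AE \<omega> in M. \<forall>i\<in>{1..n}. 0 \<le> X i \<omega>"
    using assms(4) by (intro AE_finite_allI) auto
  from AE_indicator_lifetime_expansion[OF sc this, where V = "order_stat k n X"]
  show ?thesis
    by (intro measure_eq_sum_if_indicator_eq[OF _ lifetime_event min_events]) simp_all
qed

end
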